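(* The lattice of characteristic subgroups of a finite abelian group $G$ is a chain if and only if $G\cong Z_{p^k}^{\mu_1}\times Z_{p^{k+1}}^{\mu_2}$ for some integers $k,\mu_1,\mu_2\ge 0$ and some prime $p$.
   Context: $Z_{p^a}^{\mu}$ denotes the direct product of $\mu$ copies of the cyclic group of order $p^a$. A lattice is a chain if any two of its elements are comparable. *)

theory Defs
  imports "HOL-Algebra.Algebra" "HOL-Computational_Algebra.Primes"
begin

definition characteristic_subgroup :: "'a set \<Rightarrow> ('a, 'b) monoid_scheme \<Rightarrow> bool" where
  "characteristic_subgroup H G \<longleftrightarrow>
     subgroup H G \<and> (\<forall>\<phi> \<in> Group.iso G G. \<phi> ` H = H)"

definition char_subgroups_chain :: "('a, 'b) monoid_scheme \<Rightarrow> bool" where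
  "char_subgroups_chain G \<longleftrightarrow>
     (\<forall>H K. characteristic_subgroup H G \<longrightarrow> characteristic_subgroup K G \<longrightarrow> H \<subseteq> K \<or> K \<subseteq> H)"

definition cyclic_power :: "nat \<Rightarrow> nat \<Rightarrow> (nat \<Rightarrow> int) monoid" where
  "cyclic_power n \<mu> = product_group {..<\<mu>} (\<lambda>_. integer_mod_group n)"

end

theory Submission
  imports Defs
begin

text \<open>
  For each prime \<open>q\<close> the elements of \<open>q\<close>-power order form a characteristic subgroup, so if the
  characteristic subgroups form a chain then \<open>G\<close> is a \<open>p\<close>-group, hence a product of cyclic groups
  \<open>Z/p^(e i)\<close>. If two exponents satisfy \<open>e i + 2 \<le> e j\<close>, the elements killed by \<open>p ^ e i\<close> and
  the \<open>p\<close>-th powers are incomparable characteristic subgroups. If every exponent is \<open>k\<close> or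
  \<open>k + 1\<close>, the automorphisms adding a multiple of \<open>p ^ (e j - e i) * y i\<close> to the coordinate
  \<open>y j\<close> lead from any element of exact level \<open>t\<close> of an explicit filtration to all of that
  level, so every characteristic subgroup is a level and they form a chain.
\<close>

lemma mod_mult_mod_dvd:
  fixes s b M N :: int
  assumes "N dvd s * M"
  shows "(s * (b mod M)) mod N = (s * b) mod N"
proof -
  obtain k where k: "s * M = N * k" using assms by (auto simp: dvd_def)
  have "s * (b div M * M + b mod M) = s * (b mod M) + (s * M) * (b div M)"
    by (simp only: distrib_left mult.commute mult.left_commute add.commute)
  then have "s * b = s * (b mod M) + (s * M) * (b div M)" by simp
  then have "s * b = s * (b mod M) + N * (k * (b div M))"
    using k by (simp add: mult.assoc)
  then show ?thesis by simp
qed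

lemma mod_add_scaled_mod_eq:
  fixes a b c d s M N :: int
  assumes dvd: "N dvd s * M"
  shows "((a + b) mod N + s * ((c + d) mod M)) mod N
    = ((a + s * c) mod N + (b + s * d) mod N) mod N"
proof -
  have "((a + b) mod N + s * ((c + d) mod M)) mod N
      = ((a + b) + (s * ((c + d) mod M)) mod N) mod N"
    by (simp add: mod_add_left_eq mod_add_right_eq)
  also have "\<dots> = ((a + b) + s * (c + d)) mod N"
    by (simp add: mod_mult_mod_dvd[OF dvd] mod_add_right_eq)
  also have "\<dots> = ((a + s * c) mod N + (b + s * d) mod N) mod N"
    by (simp add: algebra_simps mod_add_eq)
  finally show ?thesis .
qed

lemma power_dvd_power_diff_mult: "(a::'a::comm_semiring_1) ^ m dvd a ^ (m - l) * a ^ l"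
proof -
  have "a ^ m dvd a ^ (m - l + l)" by (rule le_imp_power_dvd) simp
  then show ?thesis by (simp add: power_add)
qed

lemma exists_nonneg_inverse_mod:
  fixes u N :: int
  assumes "coprime u N" and N: "N > 0"
  obtains u' where "u' \<ge> 0" and "N dvd u * u' - 1"
proof -
  obtain a b where ab: "a * u + b * N = 1"
    using bezout_int[of u N] assms by auto
  have "u * a - 1 = N * (- b)" using ab by (simp add: algebra_simps)
  then have "N dvd u * a - 1" by simp
  moreover have "(u * (a mod N) - 1) mod N = (u * a - 1) mod N"
    by (metis mod_diff_left_eq mod_mult_right_eq)
  ultimately have "N dvd u * (a mod N) - 1" by (simp add: dvd_eq_mod_eq_0)
  moreover have "a mod N \<ge> 0" using N by simp
  ultimately show ?thesis using that by blast
qed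

lemma eq_prime_power_if_unique_prime_divisor:
  fixes n p :: nat
  assumes p: "Factorial_Ring.prime p" and n: "n > 0"
    and unique: "\<And>q. Factorial_Ring.prime q \<Longrightarrow> q dvd n \<Longrightarrow> q = p"
  shows "n = p ^ multiplicity p n"
proof -
  have "prime_factors n \<subseteq> {p}" using unique by (auto simp: in_prime_factors_iff)
  then have "prime_factors n = {} \<or> prime_factors n = {p}" by blast
  moreover have "n = (\<Prod>q\<in>prime_factors n. q ^ multiplicity q n)"
    using prime_factorization_nat[OF n] .
  moreover have "multiplicity p n = 0" if "prime_factors n = {}"
    using that n p by (simp add: prime_factors_multiplicity)
  ultimately show ?thesis by auto
qed

lemma exists_last_holding:
  assumes "P 0" and "\<not> P T" shows "\<exists>t. P t \<and> \<not> P (Suc t)"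
  using assms by (induction T) auto

lemma subgroup_nat_pow_closed:
  assumes "subgroup H G" "h \<in> H" shows "h [^]\<^bsub>G\<^esub> (m::nat) \<in> H"
proof (induction m)
  case 0 then show ?case using subgroup.one_closed[OF assms(1)] by simp
next
  case (Suc m) then show ?case using subgroup.m_closed[OF assms(1)] assms(2) by simp
qed

context group
begin

lemma exists_outside_with_pth_power_inside:
  fixes p m :: nat
  assumes B: "subgroup B G" and x: "x \<in> carrier G" "x \<notin> B" "x [^] (p ^ m) \<in> B"
  shows "\<exists>z\<in>carrier G. z \<notin> B \<and> z [^] p \<in> B"
  using x
proof (induction m arbitrary: x)
  case 0
  then have "x [^] (1::nat) = x" by (metis One_nat_def l_one nat_pow_0 nat_pow_Suc)
  with 0 show ?case by simp
next
  case (Suc m)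
  show ?case
  proof (cases "x [^] p \<in> B")
    case True
    then show ?thesis using Suc.prems by blast
  next
    case False
    have "(x [^] p) [^] (p ^ m) = x [^] (p ^ Suc m)"
      using Suc.prems(1) by (simp add: nat_pow_pow mult.commute)
    then show ?thesis using Suc.IH[of "x [^] p"] Suc.prems False by simp
  qed
qed

lemma mem_subgroup_if_coprime_powers:
  assumes B: "subgroup B G" and y: "y \<in> carrier G"
    and "y [^] (r::int) \<in> B" and "y [^] (s::int) \<in> B" and "coprime r s"
  shows "y \<in> B"
proof -
  obtain a b where ab: "a * r + b * s = 1" using bezout_int[of r s] assms(5) by auto
  have "y = y [^] (r * a + s * b)" using y ab by (simp add: mult.commute)
  also have "\<dots> = (y [^] r) [^] a \<otimes> (y [^] s) [^] b"
    using y by (simp add: int_pow_mult int_pow_pow)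
  also have "\<dots> \<in> B"
    using assms(3,4) subgroup_int_pow_closed[OF B] subgroup.m_closed[OF B] by blast
  finally show ?thesis .
qed

lemma exists_element_of_prime_order:
  assumes fin: "finite (carrier G)" and q: "Factorial_Ring.prime q"
    and dvd: "q dvd card (carrier G)"
  obtains x where "x \<in> carrier G" and "x \<noteq> \<one>" and "x [^] q = \<one>"
proof -
  obtain m where "order G = q ^ 1 * m" using dvd by (auto simp: dvd_def order_def)
  then obtain K where K: "subgroup K G" "card K = q ^ 1"
    using sylow_thm[OF q is_group _ fin] by blast
  have "\<not> K \<subseteq> {\<one>}"
  proof
    assume "K \<subseteq> {\<one>}"
    then have "card K \<le> card {\<one>}" by (intro card_mono) auto
    then show False using K(2) prime_ge_2_nat[OF q] by simp
  qed
  then obtain x where x: "x \<in> K" "x \<noteq> \<one>" by blast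
  let ?S = "subgroup_generated G K"
  have cS: "carrier ?S = K" using subgroup.carrier_subgroup_generated_subgroup[OF K(1)] .
  have "x [^]\<^bsub>?S\<^esub> order ?S = \<one>\<^bsub>?S\<^esub>"
    using x(1) cS by (intro group.pow_order_eq_1[OF group_subgroup_generated]) simp
  moreover have "order ?S = q" using K(2) cS by (simp add: order_def)
  ultimately have "x [^] q = \<one>" by (simp add: pow_subgroup_generated)
  moreover have "x \<in> carrier G" using subgroup.mem_carrier[OF K(1) x(1)] .
  ultimately show ?thesis using that x(2) by blast
qed

lemma prime_eq_if_pow_eq_one:
  fixes p q c :: nat
  assumes x: "x \<in> carrier G" "x \<noteq> \<one>" "x [^] p = \<one>" "x [^] (q ^ c) = \<one>"
    and p: "Factorial_Ring.prime p" and q: "Factorial_Ring.prime q"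
  shows "p = q"
proof -
  have "ord x dvd p" using x pow_eq_id by blast
  moreover have "ord x \<noteq> 1" using x ord_eq_1 by blast
  ultimately have op: "ord x = p" using p prime_nat_iff by blast
  have "ord x dvd q ^ c" using x pow_eq_id by blast
  then have "p dvd q ^ c" using op by simp
  then have "p dvd q" using p prime_dvd_power by blast
  then show ?thesis using primes_dvd_imp_eq p q by blast
qed

lemma int_pow_mod_ord:
  assumes "g \<in> carrier G" shows "g [^] (c mod int (ord g)) = g [^] (c::int)"
proof -
  have "int (ord g) dvd c - c mod int (ord g)" by (simp add: mod_eq_dvd_iff)
  then show ?thesis unfolding int_pow_eq[OF assms] .
qed

lemma integer_mod_group_iso_subgroup_generated:
  assumes g: "g \<in> carrier G" and ord: "ord g > 0"
  shows "integer_mod_group (ord g) \<cong> subgroup_generated G {g}"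
proof -
  let ?Z = "integer_mod_group (ord g)" and ?C = "subgroup_generated G {g}"
  have carr: "carrier ?C = range (\<lambda>n::int. g [^] n)"
    using carrier_subgroup_generated_by_singleton[OF g] .
  have cZ: "carrier ?Z = {0..<int (ord g)}"
    using ord by (simp add: carrier_integer_mod_group)
  have "(\<lambda>c::int. g [^] c) \<in> hom ?Z ?C"
  proof (rule homI)
    show "g [^] c \<in> carrier ?C" for c :: int unfolding carr by blast
    show "g [^] (c \<otimes>\<^bsub>?Z\<^esub> d) = g [^] c \<otimes>\<^bsub>?C\<^esub> g [^] d" for c d :: int
      using int_pow_mod_ord[OF g, of "c + d"] int_pow_mult[OF g] by simp
  qed
  moreover have "inj_on (\<lambda>c::int. g [^] c) (carrier ?Z)"
  proof (rule inj_onI)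
    fix c d assume c: "c \<in> carrier ?Z" and d: "d \<in> carrier ?Z" and "g [^] c = g [^] d"
    then have "d mod int (ord g) = c mod int (ord g)"
      unfolding int_pow_eq[OF g] by (simp add: mod_eq_dvd_iff)
    moreover have "c mod int (ord g) = c" "d mod int (ord g) = d" using c d cZ by auto
    ultimately show "c = d" by simp
  qed
  moreover have "(\<lambda>c::int. g [^] c) ` carrier ?Z = carrier ?C"
  proof
    show "(\<lambda>c::int. g [^] c) ` carrier ?Z \<subseteq> carrier ?C" unfolding carr by blast
    show "carrier ?C \<subseteq> (\<lambda>c::int. g [^] c) ` carrier ?Z"
    proof
      fix y assume "y \<in> carrier ?C"
      then obtain c :: int where "y = g [^] c" using carr by auto
      then have "y = g [^] (c mod int (ord g))" using int_pow_mod_ord[OF g] by simp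
      moreover have "c mod int (ord g) \<in> carrier ?Z" using cZ ord by simp
      ultimately show "y \<in> (\<lambda>c::int. g [^] c) ` carrier ?Z" by blast
    qed
  qed
  ultimately show ?thesis by (auto simp: iso_iff intro: is_isoI)
qed

lemma exists_element_of_exponent_order:
  assumes fin: "finite (carrier G)" and p: "Factorial_Ring.prime p"
    and card: "card (carrier G) = p ^ a" and a1: "a \<ge> 1"
  shows "\<exists>m g. m \<ge> 1 \<and> g \<in> carrier G \<and> ord g = p ^ m \<and> (\<forall>x\<in>carrier G. x [^] (p ^ m) = \<one>)"
proof -
  have p2: "p \<ge> 2" using p prime_ge_2_nat by blast
  have expo: "\<forall>x\<in>carrier G. x [^] (p ^ a) = \<one>"
    using pow_order_eq_1 card by (simp add: order_def)
  define m where "m = (LEAST m. \<forall>x\<in>carrier G. x [^] (p ^ m) = \<one>)"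
  have mex: "\<forall>x\<in>carrier G. x [^] (p ^ m) = \<one>" unfolding m_def by (rule LeastI[of _ a]) (rule expo)
  have m0: "m \<noteq> 0"
  proof
    assume "m = 0"
    then have "\<forall>x\<in>carrier G. x = \<one>" using mex by simp
    then have "carrier G \<subseteq> {\<one>}" by blast
    then have "card (carrier G) \<le> card {\<one>}" by (intro card_mono) auto
    then have "card (carrier G) \<le> 1" by simp
    moreover have "p ^ a \<ge> p ^ 1" using p2 a1 by (intro power_increasing) auto
    ultimately show False using card p2 by simp
  qed
  have "m - 1 < m" using m0 by simp
  then have "\<not> (\<forall>x\<in>carrier G. x [^] (p ^ (m - 1)) = \<one>)" unfolding m_def by (rule not_less_Least)
  then obtain g where g: "g \<in> carrier G" "g [^] (p ^ (m - 1)) \<noteq> \<one>" by blast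
  have "ord g dvd p ^ m" using mex g(1) pow_eq_id by blast
  then obtain j where j: "j \<le> m" "ord g = p ^ j" using divides_primepow_nat[OF p] by blast
  have "j = m"
  proof (rule ccontr)
    assume "j \<noteq> m"
    then have "j \<le> m - 1" using j by simp
    then have "ord g dvd p ^ (m - 1)" using j(2) by (simp add: le_imp_power_dvd)
    then show False using g pow_eq_id by blast
  qed
  then show ?thesis using m0 g(1) j mex by (intro exI[of _ m] exI[of _ g]) auto
qed

end

lemma product_group_cong:
  assumes "\<And>i. i \<in> I \<Longrightarrow> G i = G' i"
  shows "product_group I G = product_group I G'"
proof -
  have "(\<Pi>\<^sub>E i\<in>I. carrier (G i)) = (\<Pi>\<^sub>E i\<in>I. carrier (G' i))"
    by (rule PiE_cong) (simp add: assms)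
  moreover have "(\<lambda>x y. \<lambda>i\<in>I. x i \<otimes>\<^bsub>G i\<^esub> y i) = (\<lambda>x y. \<lambda>i\<in>I. x i \<otimes>\<^bsub>G' i\<^esub> y i)"
    using assms by (intro ext restrict_ext) simp
  moreover have "(\<lambda>i\<in>I. \<one>\<^bsub>G i\<^esub>) = (\<lambda>i\<in>I. \<one>\<^bsub>G' i\<^esub>)"
    using assms by (intro restrict_ext) simp
  ultimately show ?thesis unfolding product_group_def by simp
qed

lemma hom_product_group_reindex:
  assumes "\<And>j. j \<in> J \<Longrightarrow> \<sigma> j \<in> I"
  shows "(\<lambda>x. \<lambda>j\<in>J. x (\<sigma> j)) \<in> hom (product_group I G) (product_group J (\<lambda>j. G (\<sigma> j)))"
  using assms by (intro homI) (auto simp: PiE_iff cong: restrict_cong)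

lemma iso_product_group_reindex:
  fixes G :: "'a \<Rightarrow> ('c, 'd) monoid_scheme" and \<sigma> :: "'b \<Rightarrow> 'a"
  assumes bij: "bij_betw \<sigma> J I"
  shows "product_group I G \<cong> product_group J (\<lambda>j. G (\<sigma> j))"
proof -
  let ?\<tau> = "the_inv_into J \<sigma>"
  have \<sigma>: "\<And>j. j \<in> J \<Longrightarrow> \<sigma> j \<in> I" and \<tau>: "\<And>i. i \<in> I \<Longrightarrow> ?\<tau> i \<in> J"
    and \<sigma>\<tau>: "\<And>i. i \<in> I \<Longrightarrow> \<sigma> (?\<tau> i) = i" and \<tau>\<sigma>: "\<And>j. j \<in> J \<Longrightarrow> ?\<tau> (\<sigma> j) = j"
    using bij by (auto simp: bij_betw_def bij_betw_apply the_inv_into_into f_the_inv_into_f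
        the_inv_into_f_f)
  have "product_group I (\<lambda>i. G (\<sigma> (?\<tau> i))) = product_group I G"
    using \<sigma>\<tau> by (intro product_group_cong) simp
  then have "(\<lambda>y. \<lambda>i\<in>I. y (?\<tau> i)) \<in> hom (product_group J (\<lambda>j. G (\<sigma> j))) (product_group I G)"
    using hom_product_group_reindex[of I ?\<tau> J "\<lambda>j. G (\<sigma> j)", OF \<tau>] by simp
  then have "group_isomorphisms (product_group I G) (product_group J (\<lambda>j. G (\<sigma> j)))
      (\<lambda>x. \<lambda>j\<in>J. x (\<sigma> j)) (\<lambda>y. \<lambda>i\<in>I. y (?\<tau> i))"
    unfolding group_isomorphisms_def using hom_product_group_reindex[OF \<sigma>]
    by (auto simp: PiE_iff extensional_def fun_eq_iff \<sigma> \<tau> \<sigma>\<tau> \<tau>\<sigma>)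
  then show ?thesis using group_isomorphisms_imp_iso is_isoI by blast
qed

lemma iso_product_group_Un:
  fixes G :: "'a \<Rightarrow> ('c, 'd) monoid_scheme"
  assumes disj: "I \<inter> J = {}"
  shows "product_group (I \<union> J) G \<cong> product_group I G \<times>\<times> product_group J G"
proof -
  let ?U = "product_group (I \<union> J) G" and ?D = "product_group I G \<times>\<times> product_group J G"
  define f :: "('a \<Rightarrow> 'c) \<Rightarrow> ('a \<Rightarrow> 'c) \<times> ('a \<Rightarrow> 'c)" where "f = (\<lambda>x. (restrict x I, restrict x J))"
  define g :: "('a \<Rightarrow> 'c) \<times> ('a \<Rightarrow> 'c) \<Rightarrow> 'a \<Rightarrow> 'c"
    where "g = (\<lambda>(a, b). \<lambda>i\<in>I \<union> J. if i \<in> I then a i else b i)"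
  have "group_isomorphisms ?U ?D f g"
    unfolding group_isomorphisms_def
  proof (intro conjI ballI)
    show "f \<in> hom ?U ?D"
      by (intro homI) (auto simp: f_def PiE_iff cong: restrict_cong)
    show "g \<in> hom ?D ?U"
    proof (rule homI)
      show "g x \<in> carrier ?U" if "x \<in> carrier ?D" for x
        using that by (cases x) (auto simp: g_def PiE_iff)
      show "g (x \<otimes>\<^bsub>?D\<^esub> y) = g x \<otimes>\<^bsub>?U\<^esub> g y" for x y
        using disj by (cases x, cases y) (auto simp: g_def fun_eq_iff)
    qed
    show "g (f x) = x" if "x \<in> carrier ?U" for x
      using that by (auto simp: f_def g_def PiE_iff extensional_def fun_eq_iff)
    show "f (g y) = y" if "y \<in> carrier ?D" for y
      using that disj by (cases y) (auto simp: f_def g_def PiE_iff extensional_def fun_eq_iff)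
  qed
  then show ?thesis using group_isomorphisms_imp_iso is_isoI by blast
qed

lemma iso_product_group_singleton:
  fixes G :: "'a \<Rightarrow> ('c, 'd) monoid_scheme"
  shows "product_group {i} G \<cong> G i"
proof -
  define f :: "('a \<Rightarrow> 'c) \<Rightarrow> 'c" where "f = (\<lambda>x. x i)"
  define g :: "'c \<Rightarrow> 'a \<Rightarrow> 'c" where "g = (\<lambda>a. \<lambda>j\<in>{i}. a)"
  have "group_isomorphisms (product_group {i} G) (G i) f g"
    unfolding group_isomorphisms_def
    by (auto simp: f_def g_def hom_def PiE_iff extensional_def fun_eq_iff)
  then show ?thesis using group_isomorphisms_imp_iso is_isoI by blast
qed

lemma iso_product_group_const:
  fixes Z :: "('c, 'd) monoid_scheme"
  assumes "finite I"
  shows "product_group I (\<lambda>_. Z) \<cong> product_group {..<card I} (\<lambda>_. Z)"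
proof -
  obtain h :: "nat \<Rightarrow> 'a" where h: "bij_betw h {0..<card I} I"
    using ex_bij_betw_nat_finite[OF assms] by blast
  have "product_group I (\<lambda>_. Z) \<cong> product_group {0..<card I} (\<lambda>j. (\<lambda>_. Z) (h j))"
    by (rule iso_product_group_reindex[OF h])
  then show ?thesis by (simp add: atLeast0LessThan)
qed

section \<open>Characteristic subgroups\<close>

lemma characteristic_subgroup_iso_image:
  assumes G: "group G" and H: "group H" and f: "f \<in> iso G H"
    and S: "characteristic_subgroup S G"
  shows "characteristic_subgroup (f ` S) H"
proof -
  have sub: "subgroup S G" and inv: "\<And>\<phi>. \<phi> \<in> iso G G \<Longrightarrow> \<phi> ` S = S"
    using S by (auto simp: characteristic_subgroup_def)
  have "\<psi> ` f ` S = f ` S" if \<psi>: "\<psi> \<in> iso H H" for \<psi>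
  proof -
    define g where "g = inv_into (carrier G) f"
    have g: "g \<in> iso H G" unfolding g_def using group.iso_set_sym[OF G f] .
    have "(g \<circ> \<psi> \<circ> f) ` S = S"
      using inv[OF iso_set_trans[OF iso_set_trans[OF f \<psi>] g]] by (simp add: comp_def)
    moreover have "f (g y) = y" if "y \<in> carrier H" for y
      using f that unfolding g_def iso_def by (blast intro: bij_betw_inv_into_right)
    moreover have "\<psi> (f x) \<in> carrier H" if "x \<in> S" for x
      using \<psi> f subgroup.mem_carrier[OF sub that] unfolding iso_def hom_def by blast
    ultimately have "f ` S = \<psi> ` f ` S"
      by (smt (verit) comp_apply image_cong image_image)
    then show ?thesis ..
  qed
  with subgroup.iso_subgroup[OF sub G H f] show ?thesis
    by (simp add: characteristic_subgroup_def)
qed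

lemma char_subgroups_chain_iso:
  assumes G: "group G" and H: "group H" and "G \<cong> H" and ch: "char_subgroups_chain H"
  shows "char_subgroups_chain G"
  unfolding char_subgroups_chain_def
proof (intro allI impI)
  fix S K assume S: "characteristic_subgroup S G" and K: "characteristic_subgroup K G"
  obtain f where f: "f \<in> iso G H" using \<open>G \<cong> H\<close> by (auto simp: is_iso_def)
  have inj: "inj_on f (carrier G)" using f by (simp add: iso_iff)
  have reflect: "A \<subseteq> B" if "f ` A \<subseteq> f ` B" "A \<subseteq> carrier G" "B \<subseteq> carrier G" for A B
  proof
    fix x assume "x \<in> A"
    with that inj_on_image_mem_iff[OF inj] show "x \<in> B" by blast
  qed
  have "S \<subseteq> carrier G" "K \<subseteq> carrier G"
    using S K by (auto simp: characteristic_subgroup_def dest: subgroup.subset)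
  moreover have "f ` S \<subseteq> f ` K \<or> f ` K \<subseteq> f ` S"
    using ch characteristic_subgroup_iso_image[OF G H f] S K
    by (simp add: char_subgroups_chain_def)
  ultimately show "S \<subseteq> K \<or> K \<subseteq> S" using reflect by blast
qed

lemma char_subgroups_chain_iso_iff:
  assumes "group G" and "group H" and "G \<cong> H"
  shows "char_subgroups_chain G \<longleftrightarrow> char_subgroups_chain H"
  using char_subgroups_chain_iso[OF assms]
    char_subgroups_chain_iso[OF assms(2,1) group.iso_sym[OF assms(1,3)]]
  by blast

context comm_group
begin

lemma characteristic_subgroup_pow_kernel:
  "characteristic_subgroup {x \<in> carrier G. x [^] (m::nat) = \<one>} G"
proof -
  let ?S = "{x \<in> carrier G. x [^] m = \<one>}"
  have "subgroup ?S G"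
    by (rule subgroupI) (auto simp: nat_pow_inv pow_mult_distrib m_comm)
  moreover have "\<phi> ` ?S = ?S" if "\<phi> \<in> iso G G" for \<phi>
  proof -
    interpret group_hom G G \<phi>
      using that by (simp add: group_hom_def group_hom_axioms_def iso_iff is_group)
    have inj: "inj_on \<phi> (carrier G)" and surj: "\<phi> ` carrier G = carrier G"
      using that unfolding iso_def bij_betw_def by blast+
    have kernel: "\<phi> x [^] m = \<one> \<longleftrightarrow> x [^] m = \<one>" if x: "x \<in> carrier G" for x
    proof -
      have "\<phi> x [^] m = \<one> \<longleftrightarrow> \<phi> (x [^] m) = \<phi> \<one>"
        using x by (simp add: hom_nat_pow)
      also have "\<dots> \<longleftrightarrow> x [^] m = \<one>"
        using x inj_on_eq_iff[OF inj, of "x [^] m" \<one>] by simp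
      finally show ?thesis .
    qed
    show ?thesis
    proof
      show "\<phi> ` ?S \<subseteq> ?S" using kernel by auto
      show "?S \<subseteq> \<phi> ` ?S"
      proof
        fix y assume y: "y \<in> ?S"
        then obtain x where "x \<in> carrier G" "y = \<phi> x" using surj by blast
        with y kernel show "y \<in> \<phi> ` ?S" by blast
      qed
    qed
  qed
  ultimately show ?thesis by (simp add: characteristic_subgroup_def)
qed

lemma characteristic_subgroup_pow_image:
  "characteristic_subgroup ((\<lambda>x. x [^] (m::nat)) ` carrier G) G"
proof -
  let ?S = "(\<lambda>x. x [^] m) ` carrier G"
  have "subgroup ?S G"
  proof (rule subgroupI)
    show "?S \<subseteq> carrier G" by auto
    show "?S \<noteq> {}" by auto
    show "inv a \<in> ?S" if "a \<in> ?S" for a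
      using that by (auto simp: nat_pow_inv intro!: image_eqI[where x="inv _"])
    show "a \<otimes> b \<in> ?S" if ab: "a \<in> ?S" "b \<in> ?S" for a b
    proof -
      obtain x y where "x \<in> carrier G" "y \<in> carrier G" "a = x [^] m" "b = y [^] m"
        using ab by auto
      then show ?thesis
        by (auto simp: pow_mult_distrib m_comm intro!: image_eqI[where x="x \<otimes> y"])
    qed
  qed
  moreover have "\<phi> ` ?S = ?S" if "\<phi> \<in> iso G G" for \<phi>
  proof -
    have hom: "\<phi> \<in> hom G G" and surj: "\<phi> ` carrier G = carrier G"
      using that by (auto simp: iso_iff)
    have "\<phi> (x [^] m) = \<phi> x [^] m" if "x \<in> carrier G" for x
      using hom_nat_pow[OF hom] is_group that by blast
    then have "\<phi> ` ?S = (\<lambda>x. x [^] m) ` \<phi> ` carrier G"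
      by (auto simp: image_iff)
    then show ?thesis using surj by simp
  qed
  ultimately show ?thesis by (simp add: characteristic_subgroup_def)
qed

lemma not_char_subgroups_chain_two_primes:
  assumes fin: "finite (carrier G)"
    and p: "Factorial_Ring.prime p" "p dvd card (carrier G)"
    and q: "Factorial_Ring.prime q" "q dvd card (carrier G)" and pq: "p \<noteq> q"
  shows "\<not> char_subgroups_chain G"
proof
  let ?c = "card (carrier G)"
  let ?P = "{z \<in> carrier G. z [^] (p ^ ?c) = \<one>}"
    and ?Q = "{z \<in> carrier G. z [^] (q ^ ?c) = \<one>}"
  have c: "?c > 0" using fin by (auto simp: card_gt_0_iff)
  have pow: "z [^] (r ^ ?c) = \<one>" if "z \<in> carrier G" "z [^] r = \<one>" for z and r :: nat
  proof -
    have "r ^ ?c = r * r ^ (?c - 1)" using c by (cases ?c) simp_all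
    then have "z [^] (r ^ ?c) = (z [^] r) [^] (r ^ (?c - 1))"
      using that(1) by (simp add: nat_pow_pow)
    then show ?thesis using that(2) by simp
  qed
  obtain x where x: "x \<in> carrier G" "x \<noteq> \<one>" "x [^] p = \<one>"
    using exists_element_of_prime_order[OF fin p] .
  obtain y where y: "y \<in> carrier G" "y \<noteq> \<one>" "y [^] q = \<one>"
    using exists_element_of_prime_order[OF fin q] .
  assume "char_subgroups_chain G"
  then have "?P \<subseteq> ?Q \<or> ?Q \<subseteq> ?P"
    using characteristic_subgroup_pow_kernel[of "p ^ ?c"]
      characteristic_subgroup_pow_kernel[of "q ^ ?c"]
    unfolding char_subgroups_chain_def by blast
  moreover have "x \<in> ?P" using x pow by simp
  moreover have "y \<in> ?Q" using y pow by simp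
  moreover have "x \<notin> ?Q"
  proof
    assume "x \<in> ?Q"
    then have "p = q" using prime_eq_if_pow_eq_one[OF x _ p(1) q(1), of ?c] by simp
    then show False using pq by simp
  qed
  moreover have "y \<notin> ?P"
  proof
    assume "y \<in> ?P"
    then have "q = p" using prime_eq_if_pow_eq_one[OF y _ q(1) p(1), of ?c] by simp
    then show False using pq by simp
  qed
  ultimately show False by blast
qed

lemma pgroup_if_char_subgroups_chain:
  assumes fin: "finite (carrier G)" and ch: "char_subgroups_chain G"
  obtains p a where "Factorial_Ring.prime p" and "card (carrier G) = p ^ a"
proof (cases "card (carrier G) = 1")
  case True
  then show ?thesis using that[of 2 0] by simp
next
  case False
  have c: "card (carrier G) > 0" using fin by (auto simp: card_gt_0_iff)
  with False obtain p where p: "Factorial_Ring.prime p" "p dvd card (carrier G)"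
    using prime_divisor_exists[of "card (carrier G)"] by auto
  have "card (carrier G) = p ^ multiplicity p (card (carrier G))"
  proof (rule eq_prime_power_if_unique_prime_divisor[OF p(1) c])
    show "q = p" if "Factorial_Ring.prime q" "q dvd card (carrier G)" for q
      using not_char_subgroups_chain_two_primes[OF fin p that] ch by blast
  qed
  then show ?thesis using that p(1) by blast
qed

end

section \<open>Finite abelian \<open>p\<close>-groups\<close>

definition Zp_product :: "nat \<Rightarrow> nat \<Rightarrow> (nat \<Rightarrow> nat) \<Rightarrow> (nat \<Rightarrow> int) monoid" where
  "Zp_product p n e = product_group {..<n} (\<lambda>i. integer_mod_group (p ^ e i))"

lemma carrier_Zp_product:
  assumes "p > 0"
  shows "carrier (Zp_product p n e) = (\<Pi>\<^sub>E i\<in>{..<n}. {0..<int p ^ e i})"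
  using assms by (simp add: Zp_product_def carrier_integer_mod_group)

lemma mult_Zp_product: "x \<otimes>\<^bsub>Zp_product p n e\<^esub> y = (\<lambda>i\<in>{..<n}. (x i + y i) mod (int p ^ e i))"
  by (simp add: Zp_product_def)

lemma one_Zp_product: "\<one>\<^bsub>Zp_product p n e\<^esub> = (\<lambda>i\<in>{..<n}. 0)"
  by (simp add: Zp_product_def)

lemma group_Zp_product: "group (Zp_product p n e)"
  by (simp add: Zp_product_def)

lemma comm_group_Zp_product: "comm_group (Zp_product p n e)"
proof -
  interpret group "Zp_product p n e" by (rule group_Zp_product)
  show ?thesis
    by (rule group_comm_groupI) (simp add: mult_Zp_product add.commute)
qed

lemma pow_Zp_product:
  assumes "x \<in> carrier (Zp_product p n e)"
  shows "x [^]\<^bsub>Zp_product p n e\<^esub> (m::nat) = (\<lambda>i\<in>{..<n}. (int m * x i) mod (int p ^ e i))"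
proof (induction m)
  case 0
  then show ?case by (simp add: one_Zp_product)
next
  case (Suc m)
  have "x [^]\<^bsub>Zp_product p n e\<^esub> Suc m = x [^]\<^bsub>Zp_product p n e\<^esub> m \<otimes>\<^bsub>Zp_product p n e\<^esub> x" by simp
  also have "\<dots> = (\<lambda>i\<in>{..<n}. (int (Suc m) * x i) mod (int p ^ e i))"
    unfolding Suc mult_Zp_product
    by (intro restrict_ext) (simp add: mod_add_right_eq algebra_simps)
  finally show ?case .
qed

lemma iso_Zp_product_Suc:
  "integer_mod_group (p ^ m) \<times>\<times> Zp_product p n e \<cong> Zp_product p (Suc n) (e(n := m))"
proof -
  let ?F = "\<lambda>i. integer_mod_group (p ^ (e(n := m)) i)"
  have U: "{..<Suc n} = {n} \<union> {..<n}" by auto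
  have 1: "Zp_product p (Suc n) (e(n := m)) \<cong> product_group {n} ?F \<times>\<times> product_group {..<n} ?F"
    unfolding Zp_product_def U by (rule iso_product_group_Un) simp
  have 2: "product_group {n} ?F \<cong> integer_mod_group (p ^ m)"
    using iso_product_group_singleton[of n ?F] by simp
  have 3: "product_group {..<n} ?F = Zp_product p n e"
    unfolding Zp_product_def by (rule product_group_cong) simp
  have grp: "group (product_group {n} ?F)" by simp
  have "product_group {n} ?F \<times>\<times> product_group {..<n} ?F
      \<cong> integer_mod_group (p ^ m) \<times>\<times> Zp_product p n e"
    using group.DirProd_iso_trans[OF grp 2 iso_refl] 3 by simp
  then have "Zp_product p (Suc n) (e(n := m)) \<cong> integer_mod_group (p ^ m) \<times>\<times> Zp_product p n e"
    using 1 iso_trans by blast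
  then show ?thesis using group.iso_sym[OF group_Zp_product] by blast
qed

lemma iso_Zp_product_0:
  assumes G: "group G" and c: "card (carrier G) = 1"
  shows "G \<cong> Zp_product p 0 e"
proof -
  obtain z where z: "carrier G = {z}" using c card_1_singletonE by blast
  then have z1: "carrier G = {\<one>\<^bsub>G\<^esub>}" using group.is_monoid[OF G] monoid.one_closed by fastforce
  have cP: "carrier (Zp_product p 0 e) = {\<one>\<^bsub>Zp_product p 0 e\<^esub>}"
    by (auto simp: Zp_product_def)
  have "group_isomorphisms G (Zp_product p 0 e) (\<lambda>x. \<one>\<^bsub>Zp_product p 0 e\<^esub>) (\<lambda>y. \<one>\<^bsub>G\<^esub>)"
    unfolding group_isomorphisms_def hom_def
    using z1 cP group.is_monoid[OF G] group.is_monoid[OF group_Zp_product]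
    by (auto simp: monoid.l_one)
  then show ?thesis using group_isomorphisms_imp_iso is_isoI by blast
qed

lemma card_DirProd_integer_mod_group:
  assumes "finite (carrier S)" "p > 0"
  shows "card (carrier (integer_mod_group (p ^ m) \<times>\<times> S)) = p ^ m * card (carrier S)"
proof -
  have "nat (int p ^ m) = p ^ m" by (metis nat_int of_nat_power)
  then show ?thesis using assms
    by (simp add: DirProd_def carrier_integer_mod_group card_cartesian_product)
qed

lemma iso_Zp_product_two_exponents:
  assumes ek: "\<And>i. i < n \<Longrightarrow> e i = k \<or> e i = k + 1"
  shows "Zp_product p n e \<cong> cyclic_power (p ^ k) (card {i. i < n \<and> e i = k})
                     \<times>\<times> cyclic_power (p ^ (k + 1)) (card {i. i < n \<and> e i \<noteq> k})"
proof -
  define I where "I = {i. i < n \<and> e i = k}"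
  define J where "J = {i. i < n \<and> e i \<noteq> k}"
  let ?F = "\<lambda>i. integer_mod_group (p ^ e i)"
  have U: "{..<n} = I \<union> J" and disj: "I \<inter> J = {}" unfolding I_def J_def by auto
  have fin: "finite I" "finite J" unfolding I_def J_def by auto
  have 1: "Zp_product p n e \<cong> product_group I ?F \<times>\<times> product_group J ?F"
    unfolding Zp_product_def U by (rule iso_product_group_Un[OF disj])
  have 2: "product_group I ?F = product_group I (\<lambda>_. integer_mod_group (p ^ k))"
    by (rule product_group_cong) (simp add: I_def)
  have 3: "product_group J ?F = product_group J (\<lambda>_. integer_mod_group (p ^ (k + 1)))"
  proof (rule product_group_cong)
    fix i assume "i \<in> J"
    then have "e i = k + 1" using ek unfolding J_def by blast
    then show "integer_mod_group (p ^ e i) = integer_mod_group (p ^ (k + 1))" by simp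
  qed
  have 4: "product_group I (\<lambda>_. integer_mod_group (p ^ k)) \<cong> cyclic_power (p ^ k) (card I)"
    unfolding cyclic_power_def by (rule iso_product_group_const[OF fin(1)])
  have 5: "product_group J (\<lambda>_. integer_mod_group (p ^ (k + 1)))
      \<cong> cyclic_power (p ^ (k + 1)) (card J)"
    unfolding cyclic_power_def by (rule iso_product_group_const[OF fin(2)])
  have grp: "group (product_group I ?F)" by simp
  have "product_group I ?F \<times>\<times> product_group J ?F
      \<cong> cyclic_power (p ^ k) (card I) \<times>\<times> cyclic_power (p ^ (k + 1)) (card J)"
    using group.DirProd_iso_trans[OF grp] 2 3 4 5 by simp
  then show ?thesis using 1 iso_trans unfolding I_def J_def by blast
qed

lemma group_DirProd_cyclic_powers: "group (cyclic_power a \<mu>1 \<times>\<times> cyclic_power b \<mu>2)"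
  unfolding cyclic_power_def by (intro DirProd_group product_group) simp_all

lemma iso_cyclic_powers_Zp_product:
  "cyclic_power (p ^ k) \<mu>1 \<times>\<times> cyclic_power (p ^ (k + 1)) \<mu>2
     \<cong> Zp_product p (\<mu>1 + \<mu>2) (\<lambda>i. if i < \<mu>1 then k else k + 1)"
proof -
  let ?e = "\<lambda>i. if i < \<mu>1 then k else k + 1"
  have c1: "card {i. i < \<mu>1 + \<mu>2 \<and> ?e i = k} = \<mu>1"
  proof -
    have "{i. i < \<mu>1 + \<mu>2 \<and> ?e i = k} = {..<\<mu>1}" by auto
    then show ?thesis by simp
  qed
  have c2: "card {i. i < \<mu>1 + \<mu>2 \<and> ?e i \<noteq> k} = \<mu>2"
  proof -
    have "{i. i < \<mu>1 + \<mu>2 \<and> ?e i \<noteq> k} = {\<mu>1..<\<mu>1 + \<mu>2}" by auto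
    then show ?thesis by simp
  qed
  have "Zp_product p (\<mu>1 + \<mu>2) ?e \<cong> cyclic_power (p ^ k) \<mu>1 \<times>\<times> cyclic_power (p ^ (k + 1)) \<mu>2"
    using iso_Zp_product_two_exponents[of "\<mu>1 + \<mu>2" ?e k p] c1 c2 by simp
  then show ?thesis using group.iso_sym[OF group_Zp_product] by blast
qed

context comm_group
begin

lemma subgroup_adjoin:
  assumes H: "subgroup H G" and y: "y \<in> carrier G"
  shows "subgroup {h \<otimes> y [^] (j::int) | h j. h \<in> H} G"
proof (rule subgroupI)
  have Hc: "H \<subseteq> carrier G" using subgroup.subset[OF H] .
  show "{h \<otimes> y [^] (j::int) | h j. h \<in> H} \<subseteq> carrier G" using Hc y by auto
  show "{h \<otimes> y [^] (j::int) | h j. h \<in> H} \<noteq> {}" using subgroup.one_closed[OF H] by blast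
  show "inv a \<in> {h \<otimes> y [^] (j::int) | h j. h \<in> H}"
    if a: "a \<in> {h \<otimes> y [^] (j::int) | h j. h \<in> H}" for a
  proof -
    obtain h j where a: "a = h \<otimes> y [^] (j::int)" "h \<in> H" using a by blast
    have "inv a = inv h \<otimes> y [^] (- j)" using a Hc y
      by (simp add: inv_mult int_pow_neg m_comm subsetD)
    moreover have "inv h \<in> H" using a subgroup.m_inv_closed[OF H] by blast
    ultimately show ?thesis by blast
  qed
  show "a \<otimes> b \<in> {h \<otimes> y [^] (j::int) | h j. h \<in> H}"
    if ab: "a \<in> {h \<otimes> y [^] (j::int) | h j. h \<in> H}" "b \<in> {h \<otimes> y [^] (j::int) | h j. h \<in> H}" for a b
  proof -
    obtain h1 j1 where a: "a = h1 \<otimes> y [^] (j1::int)" "h1 \<in> H" using ab(1) by blast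
    obtain h2 j2 where b: "b = h2 \<otimes> y [^] (j2::int)" "h2 \<in> H" using ab(2) by blast
    have "h1 \<in> carrier G" "h2 \<in> carrier G" using a b Hc by auto
    then have "a \<otimes> b = (h1 \<otimes> h2) \<otimes> y [^] (j1 + j2)"
      using a b y by (simp add: int_pow_mult m_ac)
    moreover have "h1 \<otimes> h2 \<in> H" using a b subgroup.m_closed[OF H] by blast
    ultimately show ?thesis by blast
  qed
qed

lemma psubset_adjoin:
  assumes H: "subgroup H G" and y: "y \<in> carrier G" "y \<notin> H"
  shows "H \<subset> {h \<otimes> y [^] (j::int) | h j. h \<in> H}"
proof
  show "H \<subseteq> {h \<otimes> y [^] (j::int) | h j. h \<in> H}"
    using subgroup.subset[OF H] by (force intro: exI[of _ "0::int"])
  have "y = \<one> \<otimes> y [^] (1::int)" using y(1) by simp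
  then have "y \<in> {h \<otimes> y [^] (j::int) | h j. h \<in> H}" using subgroup.one_closed[OF H] by blast
  then show "H \<noteq> {h \<otimes> y [^] (j::int) | h j. h \<in> H}" using y(2) by blast
qed

lemma prime_dvd_exponent_if_pth_power:
  fixes p m :: nat
  assumes p: "Factorial_Ring.prime p" and m: "m \<ge> 1"
    and g: "g \<in> carrier G" and ord: "ord g = p ^ m"
    and expo: "\<forall>x\<in>carrier G. x [^] (p ^ m) = \<one>"
    and H: "subgroup H G" and AH: "range (\<lambda>n::int. g [^] n) \<inter> H \<subseteq> {\<one>}"
    and z: "z \<in> carrier G" and h: "h \<in> H" and zp: "z [^] p = g [^] r \<otimes> h"
  shows "int p dvd r"
proof -
  have hc: "h \<in> carrier G" using h subgroup.subset[OF H] by blast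
  have pm: "p ^ m = p * p ^ (m - 1)" using m by (cases m) simp_all
  have "(g [^] r \<otimes> h) [^] (p ^ (m - 1)) = z [^] (p ^ m)"
    using z by (simp add: zp[symmetric] nat_pow_pow pm)
  also have "\<dots> = \<one>" using expo z by blast
  finally have "(g [^] r) [^] (p ^ (m - 1)) \<otimes> h [^] (p ^ (m - 1)) = \<one>"
    using g hc by (simp add: pow_mult_distrib m_comm)
  then have "(g [^] r) [^] (p ^ (m - 1)) = inv (h [^] (p ^ (m - 1)))"
    using g hc by (simp add: inv_equality)
  moreover have "inv (h [^] (p ^ (m - 1))) \<in> H"
    using subgroup_nat_pow_closed[OF H h] subgroup.m_inv_closed[OF H] by blast
  moreover have "(g [^] r) [^] (p ^ (m - 1)) = g [^] (r * int (p ^ (m - 1)))"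
    using g by (simp add: int_pow_pow flip: int_pow_int)
  ultimately have "g [^] (r * int (p ^ (m - 1))) = \<one>" using AH by auto
  then have "int p * int (p ^ (m - 1)) dvd r * int (p ^ (m - 1))"
    using int_pow_eq_id[OF g] ord pm by simp
  moreover have "p > 0" using p prime_gt_0_nat by blast
  ultimately show ?thesis by simp
qed

lemma exists_pth_root_outside_complement:
  fixes p m :: nat
  assumes p: "Factorial_Ring.prime p" and m: "m \<ge> 1"
    and g: "g \<in> carrier G" and ord: "ord g = p ^ m"
    and expo: "\<forall>x\<in>carrier G. x [^] (p ^ m) = \<one>"
    and H: "subgroup H G" and AH: "range (\<lambda>n::int. g [^] n) \<inter> H \<subseteq> {\<one>}"
    and x: "x \<in> carrier G" "x \<notin> range (\<lambda>n::int. g [^] n) <#> H"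
  shows "\<exists>y\<in>carrier G. y \<notin> range (\<lambda>n::int. g [^] n) <#> H \<and> y [^] p \<in> H"
proof -
  let ?A = "range (\<lambda>n::int. g [^] n)"
  have B: "subgroup (?A <#> H) G" using mult_subgroups[OF subgroup_of_powers[OF g] H] .
  have "x [^] (p ^ m) \<in> ?A <#> H" using expo x(1) subgroup.one_closed[OF B] by simp
  then obtain z where z: "z \<in> carrier G" "z \<notin> ?A <#> H" "z [^] p \<in> ?A <#> H"
    using exists_outside_with_pth_power_inside[OF B x] by blast
  then obtain r :: int and h where h: "h \<in> H" and zp: "z [^] p = g [^] r \<otimes> h"
    unfolding set_mult_def by blast
  obtain s where rs: "r = int p * s"
    using prime_dvd_exponent_if_pth_power[OF p m g ord expo H AH z(1) h zp]
      by (auto simp: dvd_def)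
  have hc: "h \<in> carrier G" using h subgroup.subset[OF H] by blast
  define y where "y = z \<otimes> g [^] (- s)"
  have yc: "y \<in> carrier G" unfolding y_def using z g by simp
  have "y [^] p = z [^] p \<otimes> (g [^] (- s)) [^] p"
    unfolding y_def using z g by (simp add: pow_mult_distrib m_comm)
  also have "(g [^] (- s)) [^] p = g [^] (- r)"
    using g rs by (simp add: int_pow_pow mult.commute flip: int_pow_int)
  also have "z [^] p \<otimes> g [^] (- r) = h"
    using zp g hc
      by (simp add: m_comm m_assoc int_pow_neg[symmetric] int_pow_mult[symmetric] m_lcomm)
  finally have "y [^] p \<in> H" using h by simp
  moreover have "y \<notin> ?A <#> H"
  proof
    assume "y \<in> ?A <#> H"
    moreover have "g [^] s \<in> ?A <#> H"
      using g subgroup.one_closed[OF H] unfolding set_mult_def by force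
    ultimately have "y \<otimes> g [^] s \<in> ?A <#> H" using subgroup.m_closed[OF B] by blast
    moreover have "y \<otimes> g [^] s = z"
      unfolding y_def using z g by (simp add: m_assoc int_pow_mult[symmetric])
    ultimately show False using z(2) by simp
  qed
  ultimately show ?thesis using yc by blast
qed

lemma complement_adjoin_inter:
  fixes p :: nat
  assumes p: "Factorial_Ring.prime p" and A: "subgroup A G" and H: "subgroup H G"
    and AH: "A \<inter> H \<subseteq> {\<one>}"
    and y: "y \<in> carrier G" "y \<notin> A <#> H" "y [^] p \<in> H"
  shows "A \<inter> {h \<otimes> y [^] (j::int) | h j. h \<in> H} \<subseteq> {\<one>}"
proof
  fix z assume z: "z \<in> A \<inter> {h \<otimes> y [^] (j::int) | h j. h \<in> H}"
  then obtain h1 j where zj: "z = h1 \<otimes> y [^] (j::int)" "h1 \<in> H" by blast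
  have Hc: "H \<subseteq> carrier G" using subgroup.subset[OF H] .
  have B: "subgroup (A <#> H) G" using mult_subgroups[OF A H] .
  have HB: "H \<subseteq> A <#> H"
    using Hc subgroup.one_closed[OF A] unfolding set_mult_def by force
  define r where "r = j mod int p"
  define h2 where "h2 = h1 \<otimes> (y [^] p) [^] (j div int p)"
  have h2: "h2 \<in> H" "h2 \<in> carrier G"
    unfolding h2_def using zj(2) y(3) Hc subgroup.m_closed[OF H] subgroup_int_pow_closed[OF H]
      by blast+
  have "y [^] j = y [^] (int p * (j div int p) + r)" by (simp add: r_def mult_div_mod_eq)
  also have "\<dots> = (y [^] p) [^] (j div int p) \<otimes> y [^] r"
    using y(1) by (simp add: int_pow_mult int_pow_pow flip: int_pow_int)
  finally have "y [^] j = (y [^] p) [^] (j div int p) \<otimes> y [^] r" .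
  then have zh: "z = h2 \<otimes> y [^] r" unfolding h2_def using zj y(1) Hc
    by (simp add: m_assoc subsetD)
  show "z \<in> {\<one>}"
  proof (cases "r = 0")
    case True
    then show ?thesis using zh h2 z AH by auto
  next
    case False
    have "0 \<le> r" "r < int p" using p prime_gt_0_nat unfolding r_def by simp_all
    then have "\<not> int p dvd r" using False zdvd_not_zless by force
    then have "coprime (int p) r" using p by (intro prime_imp_coprime) simp_all
    then have cop: "coprime r (int p)" by (simp add: coprime_commute)
    have "y [^] r = inv h2 \<otimes> z" using zh h2 y(1) by (simp add: m_assoc[symmetric])
    also have "\<dots> = z \<otimes> inv h2" using zh h2 y(1) by (simp add: m_comm)
    also have "\<dots> \<in> A <#> H"
      using z subgroup.m_inv_closed[OF H h2(1)] unfolding set_mult_def by blast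
    finally have "y [^] r \<in> A <#> H" .
    moreover have "y [^] int p \<in> A <#> H" using y(3) HB by (auto simp: int_pow_int)
    ultimately have "y \<in> A <#> H" using mem_subgroup_if_coprime_powers[OF B y(1) _ _ cop] by blast
    then show ?thesis using y(2) by contradiction
  qed
qed

text \<open>A complement of maximal order to \<open>\<langle>g\<rangle>\<close> spans \<open>G\<close>: otherwise adjoining a suitable
  \<open>p\<close>-th root of one of its elements gives a larger complement.\<close>

lemma exists_cyclic_complement:
  fixes p m :: nat
  assumes fin: "finite (carrier G)" and p: "Factorial_Ring.prime p" and m: "m \<ge> 1"
    and g: "g \<in> carrier G" and ord: "ord g = p ^ m"
    and expo: "\<forall>x\<in>carrier G. x [^] (p ^ m) = \<one>"
  obtains H where "subgroup H G" and "range (\<lambda>n::int. g [^] n) \<inter> H \<subseteq> {\<one>}"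
    and "range (\<lambda>n::int. g [^] n) <#> H = carrier G"
proof -
  let ?A = "range (\<lambda>n::int. g [^] n)"
  define S where "S = {H. subgroup H G \<and> ?A \<inter> H \<subseteq> {\<one>}}"
  have "finite S"
    using fin unfolding S_def
    by (rule rev_finite_subset[OF finite_Pow_iff[THEN iffD2]]) (auto dest: subgroup.subset)
  moreover have "{\<one>} \<in> S" unfolding S_def using triv_subgroup by blast
  ultimately obtain H where H: "H \<in> S" and max: "\<And>H'. H' \<in> S \<Longrightarrow> card H' \<le> card H"
    using Max_in[of "card ` S"]
      by (metis (no_types, lifting) Max_ge empty_iff finite_imageI imageE image_eqI)
  have subH: "subgroup H G" and AH: "?A \<inter> H \<subseteq> {\<one>}" using H unfolding S_def by auto
  have "?A <#> H = carrier G"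
  proof (rule ccontr)
    assume "?A <#> H \<noteq> carrier G"
    moreover have "?A <#> H \<subseteq> carrier G"
      using setmult_subset_G subgroup.subset[OF subgroup_of_powers[OF g]] subgroup.subset[OF subH]
        by blast
    ultimately obtain x where "x \<in> carrier G" "x \<notin> ?A <#> H" by blast
    then obtain y where y: "y \<in> carrier G" "y \<notin> ?A <#> H" "y [^] p \<in> H"
      using exists_pth_root_outside_complement[OF p m g ord expo subH AH] by blast
    define H' where "H' = {h \<otimes> y [^] (j::int) | h j. h \<in> H}"
    have subH': "subgroup H' G" unfolding H'_def using subgroup_adjoin[OF subH y(1)] .
    have "H' \<in> S"
      using subH' complement_adjoin_inter[OF p subgroup_of_powers[OF g] subH AH y]
      unfolding S_def H'_def by blast
    moreover have "y \<notin> H"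
    proof
      assume "y \<in> H"
      then have "\<one> \<otimes> y \<in> ?A <#> H"
        using subgroup.one_closed[OF subgroup_of_powers[OF g]] unfolding set_mult_def by blast
      then show False using y(1,2) by simp
    qed
    then have "H \<subset> H'" unfolding H'_def using psubset_adjoin[OF subH y(1)] by blast
    moreover have "finite H'" using subH' fin subgroup.subset finite_subset by blast
    ultimately show False using max psubset_card_mono by (meson leD)
  qed
  then show ?thesis using that subH AH by blast
qed

lemma iso_DirProd_complement:
  assumes A: "subgroup A G" and H: "subgroup H G"
    and "A \<inter> H \<subseteq> {\<one>}" and "A <#> H = carrier G"
  shows "G \<cong> subgroup_generated G A \<times>\<times> subgroup_generated G H"
proof -
  interpret group_disjoint_sum G A H
    by (simp add: group_disjoint_sum_def is_group A H)
  have "(\<lambda>(x, y). x \<otimes> y) \<in> iso (subgroup_generated G A \<times>\<times> subgroup_generated G H) G"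
    using iso_group_mul[OF comm_group_axioms] assms by simp
  moreover have "group (subgroup_generated G A \<times>\<times> subgroup_generated G H)"
    by (intro DirProd_group) simp_all
  ultimately show ?thesis using group.iso_sym is_isoI by blast
qed

lemma exists_cyclic_direct_factor:
  assumes fin: "finite (carrier G)" and p: "Factorial_Ring.prime p"
    and card: "card (carrier G) = p ^ a" and a: "a \<ge> 1"
  obtains m H where "m \<ge> 1" and "subgroup H G"
    and "G \<cong> integer_mod_group (p ^ m) \<times>\<times> subgroup_generated G H"
proof -
  obtain m g where m: "m \<ge> 1" and g: "g \<in> carrier G" and ord: "ord g = p ^ m"
    and expo: "\<forall>x\<in>carrier G. x [^] (p ^ m) = \<one>"
    using exists_element_of_exponent_order[OF fin p card a] by blast
  let ?A = "range (\<lambda>n::int. g [^] n)"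
  obtain H where H: "subgroup H G" "?A \<inter> H \<subseteq> {\<one>}" "?A <#> H = carrier G"
    using exists_cyclic_complement[OF fin p m g ord expo] by blast
  have "subgroup_generated G ?A = subgroup_generated G {g}"
  proof -
    have "carrier (subgroup_generated G ?A) = carrier (subgroup_generated G {g})"
      using subgroup.carrier_subgroup_generated_subgroup[OF subgroup_of_powers[OF g]]
        carrier_subgroup_generated_by_singleton[OF g] by simp
    then show ?thesis by (simp add: subgroup_generated_def carrier_subgroup_generated)
  qed
  moreover have "integer_mod_group (p ^ m) \<cong> subgroup_generated G {g}"
    using integer_mod_group_iso_subgroup_generated[OF g] ord p prime_gt_0_nat by simp
  ultimately have "subgroup_generated G ?A \<cong> integer_mod_group (p ^ m)"
    using group.iso_sym[OF group_integer_mod_group] by simp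
  then have "subgroup_generated G ?A \<times>\<times> subgroup_generated G H
      \<cong> integer_mod_group (p ^ m) \<times>\<times> subgroup_generated G H"
    using group.DirProd_iso_trans[OF group_subgroup_generated _ iso_refl] by blast
  then have "G \<cong> integer_mod_group (p ^ m) \<times>\<times> subgroup_generated G H"
    using iso_DirProd_complement[OF subgroup_of_powers[OF g] H] iso_trans by blast
  then show ?thesis using that m H(1) by blast
qed

end

lemma finite_abelian_pgroup_iso_Zp_product:
  fixes G :: "('a, 'b) monoid_scheme"
  assumes p: "Factorial_Ring.prime p" and G: "comm_group G" "finite (carrier G)"
    and card: "card (carrier G) = p ^ a"
  shows "\<exists>n e. (\<forall>i<n. e i \<ge> 1) \<and> G \<cong> Zp_product p n e"
  using G card
proof (induction a arbitrary: G rule: less_induct)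
  case (less a)
  interpret comm_group G by (rule less.prems(1))
  show ?case
  proof (cases "a = 0")
    case True
    then have "G \<cong> Zp_product p 0 (\<lambda>_. 1)"
      using iso_Zp_product_0[OF is_group] less.prems(3) by simp
    then show ?thesis by blast
  next
    case False
    obtain m H where m: "m \<ge> 1" and H: "subgroup H G"
      and iso: "G \<cong> integer_mod_group (p ^ m) \<times>\<times> subgroup_generated G H"
      using exists_cyclic_direct_factor[OF less.prems(2) p less.prems(3)] False by auto
    let ?S = "subgroup_generated G H"
    have finS: "finite (carrier ?S)"
      using subgroup.carrier_subgroup_generated_subgroup[OF H] less.prems(2)
        subgroup.subset[OF H] finite_subset by metis
    have "p ^ a = p ^ m * card (carrier ?S)"
      using iso_same_card[OF iso] less.prems(3) card_DirProd_integer_mod_group[OF finS]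
        prime_gt_0_nat[OF p]
      by simp
    then obtain j where j: "card (carrier ?S) = p ^ j" "p ^ a = p ^ (m + j)"
      using divides_primepow_nat[OF p, of "card (carrier ?S)" a] by (auto simp: power_add)
    then have "a = m + j" using p prime_gt_1_nat power_inject_exp by blast
    then have "j < a" using m by simp
    obtain n e where e: "\<forall>i<n. e i \<ge> 1" and "?S \<cong> Zp_product p n e"
      using less.IH[OF \<open>j < a\<close> abelian_subgroup_generated[OF less.prems(1)] finS j(1)] by blast
    then have "integer_mod_group (p ^ m) \<times>\<times> ?S \<cong> integer_mod_group (p ^ m) \<times>\<times> Zp_product p n e"
      using group.DirProd_iso_trans[OF group_integer_mod_group iso_refl] by blast
    then have "G \<cong> Zp_product p (Suc n) (e(n := m))"
      using iso_trans[OF iso_trans[OF iso] iso_Zp_product_Suc] by blast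
    moreover have "\<forall>i<Suc n. (e(n := m)) i \<ge> 1" using e m by auto
    ultimately show ?thesis by blast
  qed
qed

section \<open>Automorphisms of \<open>Zp_product\<close>\<close>

definition single_entry :: "nat \<Rightarrow> nat \<Rightarrow> (nat \<Rightarrow> nat) \<Rightarrow> nat \<Rightarrow> int \<Rightarrow> (nat \<Rightarrow> int)" where
  "single_entry p n e j c = (\<lambda>i\<in>{..<n}. if i = j then c mod (int p ^ e j) else 0)"

lemma single_entry_carrier: "p > 0 \<Longrightarrow> single_entry p n e j c \<in> carrier (Zp_product p n e)"
  by (auto simp: single_entry_def carrier_Zp_product)

lemma single_entry_pow:
  "p > 0 \<Longrightarrow>
    single_entry p n e j c [^]\<^bsub>Zp_product p n e\<^esub> (m::nat) = single_entry p n e j (int m * c)"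
  by (simp add: pow_Zp_product single_entry_carrier) (auto simp: single_entry_def mod_mult_right_eq)

lemma single_entry_cong:
  "c mod (int p ^ e j) = d mod (int p ^ e j) \<Longrightarrow> single_entry p n e j c = single_entry p n e j d"
  unfolding single_entry_def by (intro restrict_ext) simp

lemma single_entry_0: "single_entry p n e j 0 = \<one>\<^bsub>Zp_product p n e\<^esub>"
  unfolding single_entry_def one_Zp_product by (intro restrict_ext) simp

lemma mem_subgroup_if_single_entries:
  assumes p: "p > 0" and H: "subgroup H (Zp_product p n e)" and z: "z \<in> carrier (Zp_product p n e)"
    and entries: "\<And>j. j < n \<Longrightarrow> single_entry p n e j (z j) \<in> H"
  shows "z \<in> H"
proof -
  define part where "part m = (\<lambda>i\<in>{..<n}. if i < m then z i else 0)" for m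
  have zr: "\<And>j. j < n \<Longrightarrow> 0 \<le> z j \<and> z j < int p ^ e j" and ze: "z \<in> extensional {..<n}"
    using z p by (auto simp: carrier_Zp_product PiE_iff)
  have "m \<le> n \<Longrightarrow> part m \<in> H" for m
  proof (induction m)
    case 0
    have "part 0 = \<one>\<^bsub>Zp_product p n e\<^esub>" by (simp add: part_def one_Zp_product)
    then show ?case using subgroup.one_closed[OF H] by simp
  next
    case (Suc m)
    have "part (Suc m) = part m \<otimes>\<^bsub>Zp_product p n e\<^esub> single_entry p n e m (z m)"
      unfolding mult_Zp_product part_def single_entry_def
      by (intro restrict_ext) (use zr Suc.prems in auto)
    then show ?case using Suc subgroup.m_closed[OF H] entries by simp
  qed
  moreover have "part n = z" unfolding part_def using ze by (intro extensionalityI[OF _ ze]) auto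
  ultimately show ?thesis by force
qed

lemma divisible_subset_subgroup:
  assumes p: "p > 0" and H: "subgroup H (Zp_product p n e)"
    and gen: "\<And>j. j < n \<Longrightarrow> single_entry p n e j (int p ^ d j) \<in> H"
  shows "{x \<in> carrier (Zp_product p n e). \<forall>j<n. int p ^ d j dvd x j} \<subseteq> H"
proof
  fix x assume x: "x \<in> {x \<in> carrier (Zp_product p n e). \<forall>j<n. int p ^ d j dvd x j}"
  show "x \<in> H"
  proof (rule mem_subgroup_if_single_entries[OF p H])
    show "x \<in> carrier (Zp_product p n e)" using x by simp
    fix j assume j: "j < n"
    obtain c where c: "x j = int p ^ d j * c" using x j by (auto simp: dvd_def)
    have "0 \<le> int p ^ d j * c" using x j p c by (auto simp: carrier_Zp_product PiE_iff)
    moreover have "int p ^ d j > 0" using p by simp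
    ultimately have "c \<ge> 0" by (auto simp: zero_le_mult_iff)
    have "single_entry p n e j (int p ^ d j) [^]\<^bsub>Zp_product p n e\<^esub> nat c \<in> H"
      using gen[OF j] subgroup_nat_pow_closed[OF H] by simp
    then show "single_entry p n e j (x j) \<in> H"
      using single_entry_pow[OF p] c \<open>c \<ge> 0\<close> by (simp add: mult.commute)
  qed
qed

text \<open>The factor \<open>p ^ (e j - e i0)\<close> makes the added term depend only on the residue of
  \<open>y i0\<close> modulo \<open>p ^ e i0\<close>; if \<open>e j \<le> e i0\<close> the truncated difference is \<open>0\<close>, which is harmless
  because then \<open>p ^ e j\<close> divides \<open>p ^ e i0\<close>.\<close>

definition transvection ::
    "nat \<Rightarrow> nat \<Rightarrow> (nat \<Rightarrow> nat) \<Rightarrow> nat \<Rightarrow> (nat \<Rightarrow> int) \<Rightarrow> (nat \<Rightarrow> int) \<Rightarrow> nat \<Rightarrow> int" where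
 "transvection p n e i0 q y = (\<lambda>j\<in>{..<n}. if j = i0 then y j
      else (y j + (q j * int p ^ (e j - e i0)) * y i0) mod (int p ^ e j))"

lemma transvection_carrier:
  assumes p: "p > 0" and y: "y \<in> carrier (Zp_product p n e)"
  shows "transvection p n e i0 q y \<in> carrier (Zp_product p n e)"
  using y p by (auto simp: transvection_def carrier_Zp_product PiE_iff)

lemma transvection_hom:
  assumes p: "p > 0" and i0: "i0 < n"
  shows "transvection p n e i0 q \<in> hom (Zp_product p n e) (Zp_product p n e)"
proof (rule homI)
  fix x assume "x \<in> carrier (Zp_product p n e)"
  then show "transvection p n e i0 q x \<in> carrier (Zp_product p n e)" using transvection_carrier p
    by blast
next
  fix x y
  have dvd: "int p ^ e j dvd (q j * int p ^ (e j - e i0)) * int p ^ e i0" for j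
    by (simp only: mult.assoc) (rule dvd_mult[OF power_dvd_power_diff_mult])
  show "transvection p n e i0 q (x \<otimes>\<^bsub>Zp_product p n e\<^esub> y)
      = transvection p n e i0 q x \<otimes>\<^bsub>Zp_product p n e\<^esub> transvection p n e i0 q y"
    unfolding mult_Zp_product transvection_def
    using i0 mod_add_scaled_mod_eq[OF dvd] by (intro restrict_ext) auto
qed

lemma transvection_inverse:
  assumes p: "p > 0" and i0: "i0 < n" and y: "y \<in> carrier (Zp_product p n e)"
  shows "transvection p n e i0 (\<lambda>j. - q j) (transvection p n e i0 q y) = y"
proof -
  have yr: "\<And>j. j < n \<Longrightarrow> 0 \<le> y j \<and> y j < int p ^ e j" and ye: "y \<in> extensional {..<n}"
    using y p by (auto simp: carrier_Zp_product PiE_iff)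
  have cancel: "((a + s * c) mod N + (- s) * c) mod N = a mod N" for a s c N :: int
    by (simp add: mod_diff_left_eq)
  show ?thesis
  proof (rule extensionalityI[OF _ ye])
    show "transvection p n e i0 (\<lambda>j. - q j) (transvection p n e i0 q y) \<in> extensional {..<n}"
      by (simp add: transvection_def)
    fix j assume j: "j \<in> {..<n}"
    show "transvection p n e i0 (\<lambda>j. - q j) (transvection p n e i0 q y) j = y j"
    proof (cases "j = i0")
      case True then show ?thesis using j by (simp add: transvection_def)
    next
      case False
      then have "transvection p n e i0 (\<lambda>j. - q j) (transvection p n e i0 q y) j
          = ((y j + (q j * int p ^ (e j - e i0)) * y i0) mod int p ^ e j
              + (- (q j * int p ^ (e j - e i0))) * y i0) mod int p ^ e j"
        using j i0 by (simp add: transvection_def)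
      also have "\<dots> = y j mod int p ^ e j" by (rule cancel)
      also have "\<dots> = y j" using yr j by simp
      finally show ?thesis .
    qed
  qed
qed

lemma transvection_iso:
  assumes p: "p > 0" and i0: "i0 < n"
  shows "transvection p n e i0 q \<in> iso (Zp_product p n e) (Zp_product p n e)"
proof -
  have "group_isomorphisms (Zp_product p n e) (Zp_product p n e)
      (transvection p n e i0 q) (transvection p n e i0 (\<lambda>j. - q j))"
    unfolding group_isomorphisms_def
    using transvection_hom[OF p i0] transvection_inverse[OF p i0]
      transvection_inverse[OF p i0, where q="\<lambda>j. - q j"]
    by simp
  then show ?thesis by (rule group_isomorphisms_imp_iso)
qed

lemma transvection_clears:
  assumes p: "p > 0" and i0: "i0 < n" and x: "x \<in> carrier (Zp_product p n e)"
    and kill: "\<And>j. j < n \<Longrightarrow> j \<noteq> i0 \<Longrightarrow>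
      (x j + (q j * int p ^ (e j - e i0)) * x i0) mod int p ^ e j = 0"
  shows "transvection p n e i0 q x = single_entry p n e i0 (x i0)"
proof -
  have xr: "0 \<le> x i0 \<and> x i0 < int p ^ e i0" using x p i0
    by (auto simp: carrier_Zp_product PiE_iff)
  show ?thesis unfolding transvection_def single_entry_def
    by (intro restrict_ext) (use xr kill in auto)
qed

lemma transvection_single_entry:
  assumes p: "p > 0" and i0: "i0 < n" and j: "j < n" "j \<noteq> i0"
  shows "transvection p n e i0 (\<lambda>l. if l = j then 1 else 0) (single_entry p n e i0 c)
       = single_entry p n e i0 c
         \<otimes>\<^bsub>Zp_product p n e\<^esub> single_entry p n e j (int p ^ (e j - e i0) * c)"
proof -
  have m: "(int p ^ (e j - e i0) * (c mod int p ^ e i0)) mod int p ^ e j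
      = (int p ^ (e j - e i0) * c) mod int p ^ e j"
    by (rule mod_mult_mod_dvd[OF power_dvd_power_diff_mult])
  show ?thesis unfolding transvection_def single_entry_def mult_Zp_product
    by (intro restrict_ext) (use i0 j m in auto)
qed

lemma single_entry_spread:
  assumes p: "p > 0" and H: "characteristic_subgroup H (Zp_product p n e)"
    and i0: "i0 < n" and j: "j < n" and c: "single_entry p n e i0 c \<in> H"
  shows "single_entry p n e j (int p ^ (e j - e i0) * c) \<in> H"
proof (cases "j = i0")
  case True
  then show ?thesis using c by simp
next
  case False
  let ?P = "Zp_product p n e" and ?g = "single_entry p n e i0 c"
    and ?z = "single_entry p n e j (int p ^ (e j - e i0) * c)"
    and ?\<tau> = "transvection p n e i0 (\<lambda>l. if l = j then 1 else 0)"
  interpret P: group ?P by (rule group_Zp_product)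
  have sub: "subgroup H ?P" using H by (simp add: characteristic_subgroup_def)
  have "?\<tau> ` H = H"
    using H transvection_iso[OF p i0] by (simp add: characteristic_subgroup_def)
  moreover have "?\<tau> ?g \<in> ?\<tau> ` H" using c by (rule imageI)
  ultimately have "?g \<otimes>\<^bsub>?P\<^esub> ?z \<in> H"
    by (simp only: transvection_single_entry[OF p i0 j False])
  then have "inv\<^bsub>?P\<^esub> ?g \<otimes>\<^bsub>?P\<^esub> (?g \<otimes>\<^bsub>?P\<^esub> ?z) \<in> H"
    using c subgroup.m_closed[OF sub] subgroup.m_inv_closed[OF sub] by blast
  moreover have "?g \<in> carrier ?P" "?z \<in> carrier ?P"
    using single_entry_carrier[OF p] by auto
  then have "inv\<^bsub>?P\<^esub> ?g \<otimes>\<^bsub>?P\<^esub> (?g \<otimes>\<^bsub>?P\<^esub> ?z) = ?z"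
    by (simp add: P.m_assoc[symmetric])
  ultimately show ?thesis by simp
qed

lemma single_entry_unit_multiple:
  assumes p: "p > 0" and H: "subgroup H (Zp_product p n e)"
    and c: "single_entry p n e i (c * u) \<in> H"
    and u': "u' \<ge> 0" "int p ^ e i dvd u * u' - 1"
  shows "single_entry p n e i c \<in> H"
proof -
  have "int p ^ e i dvd c * (u * u' - 1)" using u'(2) by simp
  then have "(u' * (c * u)) mod int p ^ e i = c mod int p ^ e i"
    by (simp add: algebra_simps mod_eq_dvd_iff)
  then have "single_entry p n e i (int (nat u') * (c * u)) = single_entry p n e i c"
    using u'(1) by (intro single_entry_cong) simp
  moreover have "single_entry p n e i (c * u) [^]\<^bsub>Zp_product p n e\<^esub> nat u' \<in> H"
    by (rule subgroup_nat_pow_closed[OF H c])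
  ultimately show ?thesis by (simp add: single_entry_pow[OF p])
qed

lemma transvection_isolates_single_entry:
  assumes p: "p > 0" and H: "characteristic_subgroup H (Zp_product p n e)"
    and x: "x \<in> H" and i0: "i0 < n" and u: "x i0 = int p ^ v * u"
    and div: "\<And>j. j < n \<Longrightarrow> int p ^ (v + (e j - e i0)) dvd x j"
    and u': "\<And>j. j < n \<Longrightarrow> int p ^ e j dvd u * u' - 1"
  shows "single_entry p n e i0 (x i0) \<in> H"
proof -
  define q where "q j = - (x j div int p ^ (v + (e j - e i0))) * u'" for j
  have "(x j + (q j * int p ^ (e j - e i0)) * x i0) mod int p ^ e j = 0"
    if j: "j < n" "j \<noteq> i0" for j
  proof -
    define w where "w = x j div int p ^ (v + (e j - e i0))"
    have "x j = int p ^ (v + (e j - e i0)) * w" using div[OF j(1)] by (simp add: w_def)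
    then have "x j + (q j * int p ^ (e j - e i0)) * x i0
        = - (int p ^ (v + (e j - e i0)) * w) * (u * u' - 1)"
      using u unfolding q_def w_def[symmetric] by (simp add: algebra_simps power_add)
    then show ?thesis using u'[OF j(1)] by simp
  qed
  moreover have "subgroup H (Zp_product p n e)" using H by (simp add: characteristic_subgroup_def)
  then have "x \<in> carrier (Zp_product p n e)" using x by (rule subgroup.mem_carrier)
  ultimately have "transvection p n e i0 q x = single_entry p n e i0 (x i0)"
    using transvection_clears[OF p i0] by blast
  moreover have "transvection p n e i0 q ` H = H"
    using H transvection_iso[OF p i0] by (simp add: characteristic_subgroup_def)
  moreover have "transvection p n e i0 q x \<in> transvection p n e i0 q ` H"
    using x by (rule imageI)
  ultimately show ?thesis by simp
qed

lemma single_entry_isolate: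
  assumes p: "Factorial_Ring.prime p" and H: "characteristic_subgroup H (Zp_product p n e)"
    and x: "x \<in> H" and i0: "i0 < n" and u: "x i0 = int p ^ v * u" "\<not> int p dvd u"
    and div: "\<And>j. j < n \<Longrightarrow> int p ^ (v + (e j - e i0)) dvd x j"
    and bound: "\<And>j. j < n \<Longrightarrow> e j \<le> E"
  shows "single_entry p n e i0 (int p ^ v) \<in> H"
proof -
  have p0: "p > 0" using p prime_gt_0_nat by blast
  have "coprime (int p) u" using p u(2) by (simp add: prime_imp_coprime)
  then have "coprime u (int p ^ E)" by (simp add: coprime_commute)
  moreover have "int p ^ E > 0" using p0 by simp
  ultimately obtain u' where u'0: "u' \<ge> 0" and u': "int p ^ E dvd u * u' - 1"
    by (rule exists_nonneg_inverse_mod)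
  have dvd_E: "int p ^ e j dvd u * u' - 1" if "j < n" for j
    using dvd_trans[OF le_imp_power_dvd[OF bound[OF that]] u'] .
  have "single_entry p n e i0 (int p ^ v * u) \<in> H"
    using transvection_isolates_single_entry[OF p0 H x i0 u(1) div dvd_E] u(1) by simp
  moreover have "subgroup H (Zp_product p n e)" using H by (simp add: characteristic_subgroup_def)
  ultimately show ?thesis
    using single_entry_unit_multiple[where e=e and i=i0, OF p0 _ _ u'0 dvd_E[OF i0]] by blast
qed

section \<open>Exponents in \<open>{k, k + 1}\<close>: a chain\<close>

text \<open>When all exponents lie in \<open>{k, k + 1}\<close>, the characteristic subgroups are the members of the
  following chain: level \<open>t\<close> asks coordinates of exponent \<open>k + 1\<close> to be divisible by
  \<open>p ^ \<lceil>t/2\<rceil>\<close> and those of exponent \<open>k\<close> by \<open>p ^ \<lfloor>t/2\<rfloor>\<close>.\<close>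

definition filtration_exp :: "nat \<Rightarrow> (nat \<Rightarrow> nat) \<Rightarrow> nat \<Rightarrow> nat \<Rightarrow> nat" where
  "filtration_exp k e t i = (if e i = k then t else t + 1) div 2"

definition filtration :: "nat \<Rightarrow> nat \<Rightarrow> (nat \<Rightarrow> nat) \<Rightarrow> nat \<Rightarrow> nat \<Rightarrow> (nat \<Rightarrow> int) set" where
  "filtration p n e k t =
     {x \<in> carrier (Zp_product p n e). \<forall>i<n. int p ^ filtration_exp k e t i dvd x i}"

lemma filtration_antimono:
  assumes "t \<le> t'" shows "filtration p n e k t' \<subseteq> filtration p n e k t"
proof
  fix x assume x: "x \<in> filtration p n e k t'"
  have "filtration_exp k e t i \<le> filtration_exp k e t' i" for i
    using assms unfolding filtration_exp_def by (intro div_le_mono) simp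
  then have "\<And>i. int p ^ filtration_exp k e t i dvd int p ^ filtration_exp k e t' i"
    by (intro le_imp_power_dvd)
  then show "x \<in> filtration p n e k t" using x unfolding filtration_def using dvd_trans by blast
qed

lemma filtration_0: "filtration p n e k 0 = carrier (Zp_product p n e)"
  unfolding filtration_def filtration_exp_def by auto

lemma exact_filtration_level:
  assumes ek: "\<And>i. i < n \<Longrightarrow> e i = k \<or> e i = Suc k"
    and x: "x \<in> filtration p n e k t" and x': "x \<notin> filtration p n e k (Suc t)"
  obtains i0 v u where "i0 < n" and "x i0 = int p ^ v * u" and "\<not> int p dvd u"
    and "\<And>j. j < n \<Longrightarrow> v + (e j - e i0) \<le> filtration_exp k e t j"
proof -
  obtain i0 where i0: "i0 < n" and nd: "\<not> int p ^ filtration_exp k e (Suc t) i0 dvd x i0"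
    using x x' by (auto simp: filtration_def)
  define v where "v = filtration_exp k e t i0"
  obtain u where u: "x i0 = int p ^ v * u"
    using x i0 by (auto simp: filtration_def v_def dvd_def)
  have "filtration_exp k e (Suc t) i0 \<noteq> v"
    using nd u by (auto simp: v_def)
  then have step: "filtration_exp k e (Suc t) i0 = Suc v"
    unfolding v_def filtration_exp_def by presburger
  have "\<not> int p dvd u"
  proof
    assume "int p dvd u"
    then have "int p ^ Suc v dvd x i0" using u by (auto simp: dvd_def)
    then show False using nd step by simp
  qed
  moreover have "v + (e j - e i0) \<le> filtration_exp k e t j" if j: "j < n" for j
    using ek[OF j] ek[OF i0] step unfolding v_def filtration_exp_def
    by (auto split: if_splits; presburger)
  ultimately show ?thesis using that i0 u by blast
qed

lemma exists_filtration_level_excluding: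
  assumes p: "p > 0" and x: "x \<in> carrier (Zp_product p n e)" "x \<noteq> \<one>\<^bsub>Zp_product p n e\<^esub>"
  shows "\<exists>t. x \<notin> filtration p n e k t"
proof -
  have xe: "x \<in> extensional {..<n}" and xr: "\<And>i. i < n \<Longrightarrow> 0 \<le> x i \<and> x i < int p ^ e i"
    using x p by (auto simp: carrier_Zp_product PiE_iff)
  have "\<exists>i<n. x i \<noteq> 0"
  proof (rule ccontr)
    assume "\<not> (\<exists>i<n. x i \<noteq> 0)"
    then have "x = (\<lambda>i\<in>{..<n}. 0)" using xe by (intro extensionalityI[OF xe]) auto
    then show False using x(2) by (simp add: one_Zp_product)
  qed
  then obtain i where i: "i < n" "x i \<noteq> 0" by blast
  have "x \<notin> filtration p n e k (2 * e i + 2)"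
  proof
    assume "x \<in> filtration p n e k (2 * e i + 2)"
    then have "int p ^ filtration_exp k e (2 * e i + 2) i dvd x i"
      using i unfolding filtration_def by simp
    moreover have "e i + 1 \<le> filtration_exp k e (2 * e i + 2) i"
      unfolding filtration_exp_def by auto
    ultimately have "int p ^ (e i + 1) dvd x i"
      by (rule dvd_trans[OF le_imp_power_dvd, rotated])
    then have "int p ^ (e i + 1) \<le> x i"
      using xr[OF i(1)] i(2) by (simp add: zdvd_imp_le)
    moreover have "int p ^ e i \<le> int p ^ (e i + 1)" using p by (intro power_increasing) auto
    ultimately show False using xr[OF i(1)] by simp
  qed
  then show ?thesis by blast
qed

context
  fixes p n :: nat and e :: "nat \<Rightarrow> nat" and k :: nat
  assumes p: "Factorial_Ring.prime p" and ek: "\<And>i. i < n \<Longrightarrow> e i = k \<or> e i = Suc k"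
begin

lemma filtration_subset_characteristic:
  assumes H: "characteristic_subgroup H (Zp_product p n e)" and x: "x \<in> H"
    and level: "x \<in> filtration p n e k t" "x \<notin> filtration p n e k (Suc t)"
  shows "filtration p n e k t \<subseteq> H"
proof -
  have p0: "p > 0" using p prime_gt_0_nat by blast
  have sub: "subgroup H (Zp_product p n e)" using H by (simp add: characteristic_subgroup_def)
  obtain i0 v u where i0: "i0 < n" and u: "x i0 = int p ^ v * u" "\<not> int p dvd u"
    and le: "\<And>j. j < n \<Longrightarrow> v + (e j - e i0) \<le> filtration_exp k e t j"
    using exact_filtration_level[OF ek level] by blast
  define d where "d j = v + (e j - e i0)" for j
  have d_dvd: "int p ^ d j dvd y j" if y: "y \<in> filtration p n e k t" and j: "j < n" for y j
  proof -
    have "int p ^ d j dvd int p ^ filtration_exp k e t j"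
      using le[OF j] unfolding d_def by (rule le_imp_power_dvd)
    moreover have "int p ^ filtration_exp k e t j dvd y j" using y j by (simp add: filtration_def)
    ultimately show ?thesis by (rule dvd_trans)
  qed
  have "single_entry p n e i0 (int p ^ v) \<in> H"
  proof (rule single_entry_isolate[OF p H x i0 u])
    show "\<And>j. j < n \<Longrightarrow> int p ^ (v + (e j - e i0)) dvd x j"
      using d_dvd[OF level(1)] by (simp add: d_def)
    show "\<And>j. j < n \<Longrightarrow> e j \<le> Suc k" using ek by fastforce
  qed
  then have "single_entry p n e j (int p ^ d j) \<in> H" if "j < n" for j
    using single_entry_spread[OF p0 H i0 that] by (simp add: d_def power_add mult.commute)
  then have "{y \<in> carrier (Zp_product p n e). \<forall>j<n. int p ^ d j dvd y j} \<subseteq> H"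
    by (rule divisible_subset_subgroup[OF p0 sub])
  moreover have
    "filtration p n e k t \<subseteq> {y \<in> carrier (Zp_product p n e). \<forall>j<n. int p ^ d j dvd y j}"
    using d_dvd by (auto simp: filtration_def)
  ultimately show ?thesis by (rule subset_trans[rotated])
qed

lemma exists_exact_filtration_level:
  assumes H: "characteristic_subgroup H (Zp_product p n e)"
    and K: "characteristic_subgroup K (Zp_product p n e)"
    and x: "x \<in> H" "x \<notin> K"
  obtains t where "x \<in> filtration p n e k t" and "x \<notin> filtration p n e k (Suc t)"
proof -
  have "subgroup H (Zp_product p n e)" "subgroup K (Zp_product p n e)"
    using H K by (simp_all add: characteristic_subgroup_def)
  then have "x \<in> carrier (Zp_product p n e)" "x \<noteq> \<one>\<^bsub>Zp_product p n e\<^esub>"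
    using x subgroup.mem_carrier subgroup.one_closed by metis+
  moreover obtain T where "x \<notin> filtration p n e k T"
    using exists_filtration_level_excluding[OF _ calculation] p prime_gt_0_nat by blast
  ultimately show ?thesis
    using that exists_last_holding[where P="\<lambda>t. x \<in> filtration p n e k t"] filtration_0
    by blast
qed

lemma char_subgroups_chain_Zp_product: "char_subgroups_chain (Zp_product p n e)"
  unfolding char_subgroups_chain_def
proof (intro allI impI)
  fix H K
  assume H: "characteristic_subgroup H (Zp_product p n e)"
    and K: "characteristic_subgroup K (Zp_product p n e)"
  show "H \<subseteq> K \<or> K \<subseteq> H"
  proof (rule ccontr)
    assume "\<not> (H \<subseteq> K \<or> K \<subseteq> H)"
    then obtain x y where x: "x \<in> H" "x \<notin> K" and y: "y \<in> K" "y \<notin> H" by blast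
    obtain s where s: "x \<in> filtration p n e k s" "x \<notin> filtration p n e k (Suc s)"
      using exists_exact_filtration_level[OF H K x] .
    obtain t where t: "y \<in> filtration p n e k t" "y \<notin> filtration p n e k (Suc t)"
      using exists_exact_filtration_level[OF K H y] .
    have "s \<le> t \<or> t \<le> s" by linarith
    then show False
    proof
      assume "s \<le> t"
      then have "y \<in> H" using filtration_subset_characteristic[OF H x(1) s] filtration_antimono t(1)
        by blast
      then show False using y(2) by contradiction
    next
      assume "t \<le> s"
      then have "x \<in> K" using filtration_subset_characteristic[OF K y(1) t] filtration_antimono s(1)
        by blast
      then show False using x(2) by contradiction
    qed
  qed
qed

end

lemma char_subgroups_chain_cyclic_powers:
  assumes p: "Factorial_Ring.prime p"
  shows "char_subgroups_chain (cyclic_power (p ^ k) \<mu>1 \<times>\<times> cyclic_power (p ^ (k + 1)) \<mu>2)"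
proof -
  have "char_subgroups_chain (Zp_product p (\<mu>1 + \<mu>2) (\<lambda>i. if i < \<mu>1 then k else k + 1))"
    by (rule char_subgroups_chain_Zp_product[OF p]) auto
  then show ?thesis
    using char_subgroups_chain_iso_iff[OF group_DirProd_cyclic_powers group_Zp_product
        iso_cyclic_powers_Zp_product]
    by blast
qed

section \<open>Exponent gaps break the chain\<close>

lemma single_entry_not_pth_power:
  assumes p: "Factorial_Ring.prime p" and i0: "i0 < n" and e: "e i0 \<ge> 1"
  shows "single_entry p n e i0 1 \<notin> (\<lambda>x. x [^]\<^bsub>Zp_product p n e\<^esub> p) ` carrier (Zp_product p n e)"
proof
  assume "single_entry p n e i0 1 \<in> (\<lambda>x. x [^]\<^bsub>Zp_product p n e\<^esub> p) ` carrier (Zp_product p n e)"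
  then obtain y where y: "y \<in> carrier (Zp_product p n e)"
    and eq: "single_entry p n e i0 1 = y [^]\<^bsub>Zp_product p n e\<^esub> p" by blast
  have p2: "p \<ge> 2" using p prime_ge_2_nat by blast
  have "int p ^ e i0 > 1" using p2 e by (intro one_less_power) auto
  then have "single_entry p n e i0 1 i0 = 1" using i0 p2 by (simp add: single_entry_def)
  moreover have "single_entry p n e i0 1 i0 = (int p * y i0) mod int p ^ e i0"
    using eq pow_Zp_product[OF y] i0 by simp
  moreover have "int p dvd (int p * y i0) mod int p ^ e i0"
    using e by (simp add: dvd_power dvd_mod)
  ultimately have "int p dvd 1" by simp
  then show False using p2 by simp
qed

lemma single_entry_pow_ne_one:
  assumes p: "Factorial_Ring.prime p" and j0: "j0 < n" and gap: "e j0 \<ge> m + 2"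
  shows "single_entry p n e j0 (int p) [^]\<^bsub>Zp_product p n e\<^esub> (p ^ m) \<noteq> \<one>\<^bsub>Zp_product p n e\<^esub>"
proof
  have p0: "p > 0" and p2: "p \<ge> 2" using p prime_gt_0_nat prime_ge_2_nat by auto
  assume "single_entry p n e j0 (int p) [^]\<^bsub>Zp_product p n e\<^esub> (p ^ m) = \<one>\<^bsub>Zp_product p n e\<^esub>"
  then have "single_entry p n e j0 (int (p ^ m) * int p) j0 = 0"
    using single_entry_pow[OF p0] j0 by (simp add: one_Zp_product)
  then have "int p ^ (m + 1) mod int p ^ e j0 = 0"
    using j0 by (simp add: single_entry_def mult.commute)
  moreover have "int p ^ (m + 1) mod int p ^ e j0 = int p ^ (m + 1)"
    using p2 gap by (intro mod_pos_pos_trivial power_strict_increasing) auto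
  moreover have "int p ^ (m + 1) > 0" using p0 by simp
  ultimately show False by linarith
qed

lemma not_char_subgroups_chain_Zp_product:
  assumes p: "Factorial_Ring.prime p" and i0: "i0 < n" and j0: "j0 < n"
    and e: "e i0 \<ge> 1" and gap: "e j0 \<ge> e i0 + 2"
  shows "\<not> char_subgroups_chain (Zp_product p n e)"
proof
  let ?P = "Zp_product p n e"
  let ?\<Omega> = "{x \<in> carrier ?P. x [^]\<^bsub>?P\<^esub> (p ^ e i0) = \<one>\<^bsub>?P\<^esub>}"
    and ?\<Pi> = "(\<lambda>x. x [^]\<^bsub>?P\<^esub> p) ` carrier ?P"
  have p0: "p > 0" using p prime_gt_0_nat by blast
  assume "char_subgroups_chain ?P"
  moreover have "characteristic_subgroup ?\<Omega> ?P"
    by (rule comm_group.characteristic_subgroup_pow_kernel[OF comm_group_Zp_product])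
  moreover have "characteristic_subgroup ?\<Pi> ?P"
    by (rule comm_group.characteristic_subgroup_pow_image[OF comm_group_Zp_product])
  ultimately have "?\<Omega> \<subseteq> ?\<Pi> \<or> ?\<Pi> \<subseteq> ?\<Omega>" by (simp add: char_subgroups_chain_def)
  moreover have "single_entry p n e i0 1 \<in> ?\<Omega>"
  proof -
    have "single_entry p n e i0 (int (p ^ e i0) * 1) = single_entry p n e i0 0"
      by (rule single_entry_cong) simp
    then show ?thesis using single_entry_carrier[OF p0] single_entry_pow[OF p0] single_entry_0
      by simp
  qed
  moreover have "single_entry p n e j0 (int p) \<in> ?\<Pi>"
  proof (rule image_eqI)
    show "single_entry p n e j0 (int p) = single_entry p n e j0 1 [^]\<^bsub>?P\<^esub> p"
      using single_entry_pow[OF p0, of n e j0 1 p] by simp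
  qed (rule single_entry_carrier[OF p0])
  moreover have "single_entry p n e j0 (int p) \<notin> ?\<Omega>"
    using single_entry_pow_ne_one[where e=e, OF p j0 gap] by simp
  ultimately show False using single_entry_not_pth_power[where e=e, OF p i0 e] by blast
qed

lemma char_subgroups_chain_Zp_product_exponents:
  assumes p: "Factorial_Ring.prime p" and e: "\<And>i. i < n \<Longrightarrow> e i \<ge> 1"
    and ch: "char_subgroups_chain (Zp_product p n e)"
  obtains k where "\<And>i. i < n \<Longrightarrow> e i = k \<or> e i = k + 1"
proof (cases "n = 0")
  case True
  then show ?thesis using that by simp
next
  case False
  define k where "k = Min (e ` {..<n})"
  have "k \<in> e ` {..<n}" unfolding k_def using False by (intro Min_in) auto
  then obtain i0 where i0: "i0 < n" "e i0 = k" by auto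
  have "e i \<le> k + 1" if i: "i < n" for i
    using not_char_subgroups_chain_Zp_product[where e=e, OF p i0(1) i e[OF i0(1)]] ch i0(2)
      by linarith
  moreover have "k \<le> e i" if "i < n" for i unfolding k_def using that by simp
  ultimately have "e i = k \<or> e i = k + 1" if "i < n" for i using that by fastforce
  then show ?thesis by (rule that)
qed

theorem mainTheorem9:
  fixes G :: "('a, 'b) monoid_scheme"
  assumes "comm_group G" and "finite (carrier G)"
  shows "char_subgroups_chain G \<longleftrightarrow>
    (\<exists>(p::nat) k \<mu>1 \<mu>2. Factorial_Ring.prime p \<and>
       G \<cong> (cyclic_power (p ^ k) \<mu>1 \<times>\<times> cyclic_power (p ^ (k + 1)) \<mu>2))"
    (is "_ \<longleftrightarrow> ?normal_form")
proof
  have G: "group G" using assms(1) by (rule comm_group.axioms(2))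
  {
    assume ch: "char_subgroups_chain G"
    obtain p a where p: "Factorial_Ring.prime p" and "card (carrier G) = p ^ a"
      using comm_group.pgroup_if_char_subgroups_chain[OF assms ch] .
    then obtain n e where e: "\<forall>i<n. e i \<ge> 1" and iso: "G \<cong> Zp_product p n e"
      using finite_abelian_pgroup_iso_Zp_product[OF p assms] by blast
    then have "char_subgroups_chain (Zp_product p n e)"
      using ch char_subgroups_chain_iso_iff[OF G group_Zp_product] by blast
    then obtain k where "\<And>i. i < n \<Longrightarrow> e i = k \<or> e i = k + 1"
      using char_subgroups_chain_Zp_product_exponents[OF p] e by blast
    then show ?normal_form using p iso_trans[OF iso iso_Zp_product_two_exponents] by blast
  }
  assume ?normal_form
  then obtain p k \<mu>1 \<mu>2 where p: "Factorial_Ring.prime p"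
    and iso: "G \<cong> cyclic_power (p ^ k) \<mu>1 \<times>\<times> cyclic_power (p ^ (k + 1)) \<mu>2" by blast
  show "char_subgroups_chain G"
    using char_subgroups_chain_iso_iff[OF G group_DirProd_cyclic_powers iso]
      char_subgroups_chain_cyclic_powers[OF p] by blast
qed

end
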